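(* Call a butterfly partition of $n$ a partition of $n$ into distinct parts $p_1>p_2>\dots>p_k$ with $k\ge 3$, $p_1=p_2+1=p_3+2$ and $p_k\ge 2$. For $n\ge 6$ let $s_e(n)$ (resp. $s_o(n)$) be the number of butterfly partitions of $n$ whose second largest part $p_2$ is even (resp. odd). For an integer $t$ put $P_1(t)=\tfrac12(3t^2+t+4)$, $P_2(t)=\tfrac12(3(t+1)^2-t-1)$, $P_3(t)=\tfrac12(3(t+1)^2-t+3)$, $P_4(t)=\tfrac12(3(t+1)^2+t+1)$. Then for every integer $n\ge 6$: (a) $s_e(n)=s_o(n)$ if $n\notin\{P_1(t),P_2(t),P_3(t),P_4(t)\}$ for every integer $t\ge 2$; (b) $s_e(n)=s_o(n)-1$ if $n=P_1(t)$ or $n=P_4(t)$ for some integer $t\ge 2$; (c) $s_e(n)=s_o(n)+1$ if $n=P_2(t)$ or $n=P_3(t)$ for some integer $t\ge 2$. *)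

theory Defs
  imports Main
begin

definition butterfly_partition :: "nat \<Rightarrow> nat list \<Rightarrow> bool" where
  "butterfly_partition n ps \<longleftrightarrow>
     sorted_wrt (>) ps \<and> (\<forall>p\<in>set ps. p > 0) \<and> sum_list ps = n \<and>
     length ps \<ge> 3 \<and> ps ! 0 = ps ! 1 + 1 \<and> ps ! 1 = ps ! 2 + 1 \<and> last ps \<ge> 2"

definition s_e :: "nat \<Rightarrow> nat" where
  "s_e n = card {ps. butterfly_partition n ps \<and> even (ps ! 1)}"

definition s_o :: "nat \<Rightarrow> nat" where
  "s_o n = card {ps. butterfly_partition n ps \<and> odd (ps ! 1)}"

definition P1 :: "int \<Rightarrow> int" where "P1 t = (3*t^2 + t + 4) div 2"
definition P2 :: "int \<Rightarrow> int" where "P2 t = (3*(t+1)^2 - t - 1) div 2"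
definition P3 :: "int \<Rightarrow> int" where "P3 t = (3*(t+1)^2 - t + 3) div 2"
definition P4 :: "int \<Rightarrow> int" where "P4 t = (3*(t+1)^2 + t + 1) div 2"

end

theory Submission
  imports Defs "HOL-Computational_Algebra.Formal_Power_Series"
begin

unbundle fps_syntax

text \<open>
  Deleting the three largest parts a + 1, a, a - 1 of a butterfly partition with second part a
  leaves a set of distinct parts from {2..a - 2}. Hence s_e(n) - s_o(n) is the coefficient of
  q^n in -q^9 H(3,2), where H(m,k) = sum_b (-1)^b q^(mb) (1 + q^k) ... (1 + q^(k+b-1)).
  Splitting off the first or the last factor of each product gives the functional equations
  H(m,k) = 1 - q^m (1 + q^k) H(m,k+1) and (1 + q^m) H(m,k) = 1 - q^(m+k) H(m+1,k), which combine
  to H(k,k) = 1 - q^k + q^(3k+1) H(k+1,k+1). Iterating, H(k,k) = sum_s q^e (1 - q^(e+s+k)) with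
  2e = 3s^2 + (6k-1)s, a series whose exponents are at least k apart. Finally
  H(3,2) = 1 - (q^3 + q^5) H(3,3), and the exponents of H(3,3) shifted by 12 and by 14, together
  with 9 = P_1(2), are exactly the values P_i(t).
\<close>

section \<open>Locally finite sums of formal power series\<close>

definition fps_order_ge_index :: "(nat \<Rightarrow> 'a::zero fps) \<Rightarrow> bool" where
  "fps_order_ge_index f \<longleftrightarrow> (\<forall>b n. n < b \<longrightarrow> f b $ n = 0)"

text \<open>For a family satisfying \<^const>\<open>fps_order_ge_index\<close> this is the sum of the family.\<close>

definition fps_lfsum :: "(nat \<Rightarrow> 'a::comm_monoid_add fps) \<Rightarrow> 'a fps" where
  "fps_lfsum f = Abs_fps (\<lambda>n. \<Sum>b\<le>n. f b $ n)"

lemma fps_lfsum_nth: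
  assumes "fps_order_ge_index f" "n \<le> N"
  shows "fps_lfsum f $ n = (\<Sum>b\<le>N. f b $ n)"
  unfolding fps_lfsum_def
  by (simp, rule sum.mono_neutral_left) (use assms in \<open>auto simp: fps_order_ge_index_def\<close>)

lemma fps_lfsum_add: "fps_lfsum (\<lambda>b. f b + g b) = fps_lfsum f + fps_lfsum g"
  by (simp add: fps_lfsum_def fps_eq_iff sum.distrib)

lemma fps_lfsum_mult_left:
  fixes f :: "nat \<Rightarrow> 'a::semiring_0 fps"
  assumes "fps_order_ge_index f"
  shows "fps_lfsum (\<lambda>b. c * f b) = c * fps_lfsum f"
proof (rule fps_ext)
  fix n
  have "fps_lfsum (\<lambda>b. c * f b) $ n = (\<Sum>b\<le>n. \<Sum>i=0..n. c $ i * f b $ (n - i))"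
    by (simp add: fps_lfsum_def fps_mult_nth)
  also have "\<dots> = (\<Sum>i=0..n. c $ i * (\<Sum>b\<le>n. f b $ (n - i)))"
    by (subst sum.swap) (simp add: sum_distrib_left)
  also have "\<dots> = (c * fps_lfsum f) $ n"
    by (simp add: fps_mult_nth fps_lfsum_nth[OF assms, of "n - _" n])
  finally show "fps_lfsum (\<lambda>b. c * f b) $ n = (c * fps_lfsum f) $ n" .
qed

lemma fps_lfsum_shift:
  assumes "fps_order_ge_index f"
  shows "fps_lfsum f = f 0 + fps_lfsum (\<lambda>b. f (Suc b))"
proof (rule fps_ext)
  fix n
  have "fps_lfsum f $ n = (\<Sum>b\<le>Suc n. f b $ n)"
    by (rule fps_lfsum_nth[OF assms]) simp
  also have "\<dots> = f 0 $ n + (\<Sum>b\<le>n. f (Suc b) $ n)"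
    by (rule sum.atMost_Suc_shift)
  finally show "fps_lfsum f $ n = (f 0 + fps_lfsum (\<lambda>b. f (Suc b))) $ n"
    by (simp add: fps_lfsum_def)
qed

lemma fps_nth_prod_one_plus_X_power:
  assumes "finite J"
  shows "(\<Prod>j\<in>J. 1 + fps_X ^ j :: 'a::comm_semiring_1 fps) $ r = of_nat (card {S. S \<subseteq> J \<and> \<Sum>S = r})"
  using assms
proof (induction J arbitrary: r rule: finite_induct)
  case empty
  have "{S. S \<subseteq> {} \<and> \<Sum>S = r} = (if r = 0 then {{}} else {})" by auto
  then show ?case by simp
next
  case (insert x J)
  have sum_insert: "\<Sum>(insert x S) = x + \<Sum>S" if "S \<subseteq> J" for S
  proof -
    have "finite S" "x \<notin> S" using that insert.hyps finite_subset by auto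
    then show ?thesis by simp
  qed
  have "{S. S \<subseteq> insert x J \<and> \<Sum>S = r} =
      {S \<in> Pow J. \<Sum>S = r} \<union> {S \<in> insert x ` Pow J. \<Sum>S = r}"
    by (simp only: Pow_iff[symmetric] Pow_insert) blast
  also have "{S \<in> insert x ` Pow J. \<Sum>S = r} = insert x ` {S \<in> Pow J. x + \<Sum>S = r}"
    by (auto simp: sum_insert)
  finally have split: "{S. S \<subseteq> insert x J \<and> \<Sum>S = r} =
      {S \<in> Pow J. \<Sum>S = r} \<union> insert x ` {S \<in> Pow J. x + \<Sum>S = r}" .
  have inj: "inj_on (insert x) (Pow J)"
    using insert.hyps by (meson PowD inj_on_def insert_ident subsetD)
  have disj: "{S \<in> Pow J. \<Sum>S = r} \<inter> insert x ` {S \<in> Pow J. x + \<Sum>S = r} = {}"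
    using insert.hyps by auto
  have "card (insert x ` {S \<in> Pow J. x + \<Sum>S = r}) = card {S \<in> Pow J. x + \<Sum>S = r}"
    by (rule card_image, rule inj_on_subset[OF inj]) auto
  then have "card {S. S \<subseteq> insert x J \<and> \<Sum>S = r} =
      card {S \<in> Pow J. \<Sum>S = r} + card {S \<in> Pow J. x + \<Sum>S = r}"
    unfolding split using insert.hyps(1) disj by (simp add: card_Un_disjoint)
  moreover have "{S \<in> Pow J. x + \<Sum>S = r} = (if r < x then {} else {S \<in> Pow J. \<Sum>S = r - x})"
    by auto
  moreover have "(\<Prod>j\<in>insert x J. 1 + fps_X ^ j :: 'a fps) =
      (\<Prod>j\<in>J. 1 + fps_X ^ j) + fps_X ^ x * (\<Prod>j\<in>J. 1 + fps_X ^ j)"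
    using insert.hyps by (simp add: algebra_simps)
  ultimately show ?case
    using insert.IH by (simp add: fps_X_power_mult_nth Pow_def)
qed

section \<open>Functional equations of the alternating series\<close>

definition distinct_parts_fps :: "nat \<Rightarrow> nat \<Rightarrow> int fps" where
  "distinct_parts_fps k b = (\<Prod>j = k..<k + b. 1 + fps_X ^ j)"

definition alt_term :: "nat \<Rightarrow> nat \<Rightarrow> nat \<Rightarrow> int fps" where
  "alt_term m k b = (-1) ^ b * fps_X ^ (m * b) * distinct_parts_fps k b"

definition alt_series :: "nat \<Rightarrow> nat \<Rightarrow> int fps" where
  "alt_series m k = fps_lfsum (alt_term m k)"

lemma distinct_parts_fps_nth: "distinct_parts_fps k b $ r = int (card {S. S \<subseteq> {k..<k + b} \<and> \<Sum>S = r})"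
  unfolding distinct_parts_fps_def by (simp add: fps_nth_prod_one_plus_X_power)

lemma alt_term_nth:
  "alt_term m k b $ n = (if n < m * b then 0 else (-1) ^ b * distinct_parts_fps k b $ (n - m * b))"
proof -
  have "alt_term m k b = fps_X ^ (m * b) * ((-1) ^ b * distinct_parts_fps k b)"
    by (simp add: alt_term_def algebra_simps)
  moreover have "((-1) ^ b * f) $ i = (-1) ^ b * f $ i" for f :: "int fps" and i
    by (induction b) auto
  ultimately show ?thesis
    by (simp add: fps_X_power_mult_nth)
qed

lemma alt_term_order_ge_index: "m \<ge> 1 \<Longrightarrow> fps_order_ge_index (alt_term m k)"
  unfolding fps_order_ge_index_def alt_term_nth
  by (metis less_le_trans mult_1 mult_le_mono1)

lemma alt_term_0: "alt_term m k 0 = 1"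
  by (simp add: alt_term_def distinct_parts_fps_def)

lemma alt_term_Suc_split_first:
  "alt_term m k (Suc b) = - (fps_X ^ m * (1 + fps_X ^ k)) * alt_term m (Suc k) b"
proof -
  have "distinct_parts_fps k (Suc b) = (1 + fps_X ^ k) * distinct_parts_fps (Suc k) b"
    unfolding distinct_parts_fps_def by (simp add: prod.atLeast_Suc_lessThan)
  then show ?thesis
    unfolding alt_term_def by (simp add: power_add algebra_simps)
qed

lemma alt_term_Suc_split_last:
  "alt_term m k (Suc b) = - (fps_X ^ m * alt_term m k b) - fps_X ^ (m + k) * alt_term (Suc m) k b"
proof -
  have "distinct_parts_fps k (Suc b) = distinct_parts_fps k b * (1 + fps_X ^ (k + b))"
    unfolding distinct_parts_fps_def by simp
  moreover have "(fps_X :: int fps) ^ (m * Suc b) * fps_X ^ (k + b) = fps_X ^ (m + k) * fps_X ^ (Suc m * b)"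
    by (simp flip: power_add add: algebra_simps)
  ultimately show ?thesis
    unfolding alt_term_def by (simp add: power_add algebra_simps)
qed

lemma alt_series_shift_k:
  assumes "m \<ge> 1"
  shows "alt_series m k = 1 - fps_X ^ m * (1 + fps_X ^ k) * alt_series m (Suc k)"
proof -
  have "alt_series m k = alt_term m k 0 + fps_lfsum (\<lambda>b. alt_term m k (Suc b))"
    unfolding alt_series_def by (rule fps_lfsum_shift[OF alt_term_order_ge_index[OF assms]])
  also have "fps_lfsum (\<lambda>b. alt_term m k (Suc b)) =
      - (fps_X ^ m * (1 + fps_X ^ k)) * alt_series m (Suc k)"
    unfolding alt_term_Suc_split_first alt_series_def
    by (rule fps_lfsum_mult_left[OF alt_term_order_ge_index[OF assms]])
  finally show ?thesis by (simp add: alt_term_0)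
qed

lemma alt_series_shift_m:
  assumes "m \<ge> 1"
  shows "(1 + fps_X ^ m) * alt_series m k = 1 - fps_X ^ (m + k) * alt_series (Suc m) k"
proof -
  have "alt_series m k = alt_term m k 0 + fps_lfsum (\<lambda>b. alt_term m k (Suc b))"
    unfolding alt_series_def by (rule fps_lfsum_shift[OF alt_term_order_ge_index[OF assms]])
  also have "fps_lfsum (\<lambda>b. alt_term m k (Suc b)) =
      - (fps_X ^ m * alt_series m k) - fps_X ^ (m + k) * alt_series (Suc m) k"
    unfolding alt_term_Suc_split_last alt_series_def diff_conv_add_uminus fps_lfsum_add
      mult_minus_left[symmetric]
    by (simp only: fps_lfsum_mult_left alt_term_order_ge_index assms le_SucI)
  finally show ?thesis by (simp add: alt_term_0 algebra_simps)
qed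

lemma alt_series_diagonal:
  assumes "k \<ge> 1"
  shows "alt_series k k = 1 - fps_X ^ k + fps_X ^ (3 * k + 1) * alt_series (Suc k) (Suc k)"
proof -
  let ?x = "fps_X ^ k :: int fps" and ?H = "alt_series (Suc k) (Suc k)"
  have "(1 + ?x) * alt_series k k = 1 - fps_X ^ (k + k) * alt_series (Suc k) k"
    using alt_series_shift_m[OF assms] .
  also have "alt_series (Suc k) k = 1 - fps_X ^ Suc k * (1 + ?x) * ?H"
    by (rule alt_series_shift_k) simp
  also have "1 - fps_X ^ (k + k) * (1 - fps_X ^ Suc k * (1 + ?x) * ?H) =
      (1 + ?x) * (1 - ?x + ?x * ?x * fps_X ^ Suc k * ?H)"
    by (simp add: power_add algebra_simps)
  finally have "(1 + ?x) * alt_series k k = (1 + ?x) * (1 - ?x + ?x * ?x * fps_X ^ Suc k * ?H)" .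
  moreover have "3 * k + 1 = k + k + Suc k"
    by simp
  moreover have "(1 + ?x) $ 0 \<noteq> 0"
    using assms by simp
  then have "1 + ?x \<noteq> 0"
    by (metis fps_zero_nth)
  ultimately show ?thesis
    by (metis mult_left_cancel power_add)
qed

section \<open>Coefficients of the diagonal series\<close>

definition pos_exponent :: "nat \<Rightarrow> nat \<Rightarrow> bool" where
  "pos_exponent k n \<longleftrightarrow> (\<exists>s. 2 * n + s = 3 * s\<^sup>2 + 6 * k * s)"

definition neg_exponent :: "nat \<Rightarrow> nat \<Rightarrow> bool" where
  "neg_exponent k n \<longleftrightarrow> (\<exists>s. 2 * n = 3 * s\<^sup>2 + 6 * k * s + s + 2 * k)"

lemma pos_exponent_rec:
  "pos_exponent k n \<longleftrightarrow> n = 0 \<or> 3 * k + 1 \<le> n \<and> pos_exponent (Suc k) (n - (3 * k + 1))"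
proof
  assume "pos_exponent k n"
  then obtain s where s: "2 * n + s = 3 * s\<^sup>2 + 6 * k * s"
    unfolding pos_exponent_def by blast
  show "n = 0 \<or> 3 * k + 1 \<le> n \<and> pos_exponent (Suc k) (n - (3 * k + 1))"
  proof (cases s)
    case 0
    then show ?thesis using s by simp
  next
    case (Suc t)
    then have eq: "2 * n + t = 3 * (t * t) + 6 * t + 6 * k * t + (6 * k + 2)"
      using s by (simp add: power2_eq_square algebra_simps)
    then have "3 * k + 1 \<le> n"
      using le_square[of t] by linarith
    moreover have "2 * (n - (3 * k + 1)) + t = 3 * t\<^sup>2 + 6 * Suc k * t"
      using eq calculation by (simp add: power2_eq_square algebra_simps)
    ultimately show ?thesis unfolding pos_exponent_def by blast
  qed
next
  assume "n = 0 \<or> 3 * k + 1 \<le> n \<and> pos_exponent (Suc k) (n - (3 * k + 1))"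
  then show "pos_exponent k n"
  proof
    assume "n = 0"
    then show ?thesis unfolding pos_exponent_def by (intro exI[of _ 0]) simp
  next
    assume "3 * k + 1 \<le> n \<and> pos_exponent (Suc k) (n - (3 * k + 1))"
    then obtain t where "3 * k + 1 \<le> n" "2 * (n - (3 * k + 1)) + t = 3 * t\<^sup>2 + 6 * Suc k * t"
      unfolding pos_exponent_def by blast
    then have "2 * n + Suc t = 3 * (Suc t)\<^sup>2 + 6 * k * Suc t"
      by (simp add: power2_eq_square algebra_simps)
    then show ?thesis unfolding pos_exponent_def by blast
  qed
qed

lemma neg_exponent_rec:
  "neg_exponent k n \<longleftrightarrow> n = k \<or> 3 * k + 1 \<le> n \<and> neg_exponent (Suc k) (n - (3 * k + 1))"
proof
  assume "neg_exponent k n"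
  then obtain s where s: "2 * n = 3 * s\<^sup>2 + 6 * k * s + s + 2 * k"
    unfolding neg_exponent_def by blast
  show "n = k \<or> 3 * k + 1 \<le> n \<and> neg_exponent (Suc k) (n - (3 * k + 1))"
  proof (cases s)
    case 0
    then show ?thesis using s by simp
  next
    case (Suc t)
    then have "2 * n = 3 * t\<^sup>2 + 6 * Suc k * t + t + 2 * Suc k + (6 * k + 2)"
      using s by (simp add: power2_eq_square algebra_simps)
    then have "3 * k + 1 \<le> n" "2 * (n - (3 * k + 1)) = 3 * t\<^sup>2 + 6 * Suc k * t + t + 2 * Suc k"
      by (simp_all add: power2_eq_square)
    then show ?thesis unfolding neg_exponent_def by blast
  qed
next
  assume "n = k \<or> 3 * k + 1 \<le> n \<and> neg_exponent (Suc k) (n - (3 * k + 1))"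
  then show "neg_exponent k n"
  proof
    assume "n = k"
    then show ?thesis unfolding neg_exponent_def by (intro exI[of _ 0]) simp
  next
    assume "3 * k + 1 \<le> n \<and> neg_exponent (Suc k) (n - (3 * k + 1))"
    then obtain t where "3 * k + 1 \<le> n" "2 * (n - (3 * k + 1)) = 3 * t\<^sup>2 + 6 * Suc k * t + t + 2 * Suc k"
      unfolding neg_exponent_def by blast
    then have "2 * n = 3 * (Suc t)\<^sup>2 + 6 * k * Suc t + Suc t + 2 * k"
      by (simp add: power2_eq_square algebra_simps)
    then show ?thesis unfolding neg_exponent_def by blast
  qed
qed

lemma alt_series_diagonal_nth:
  "k \<ge> 1 \<Longrightarrow> alt_series k k $ n = of_bool (pos_exponent k n) - of_bool (neg_exponent k n)"
proof (induction n arbitrary: k rule: less_induct)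
  case (less n)
  have "alt_series k k $ n = of_bool (n = 0) - of_bool (n = k)
      + (if n < 3 * k + 1 then 0 else alt_series (Suc k) (Suc k) $ (n - (3 * k + 1)))"
    by (subst alt_series_diagonal[OF less.prems], unfold fps_add_nth fps_sub_nth fps_X_power_mult_nth)
      simp
  also have "\<dots> = of_bool (pos_exponent k n) - of_bool (neg_exponent k n)"
    using less.IH[of "n - (3 * k + 1)" "Suc k"] less.prems
    by (subst pos_exponent_rec, subst neg_exponent_rec) auto
  finally show ?case .
qed

lemma exponent_bound_mono:
  fixes k s t x y :: nat
  assumes "2 * x \<le> 3 * s\<^sup>2 + 6 * k * s + s + 2 * k" "3 * t\<^sup>2 + 6 * k * t \<le> 2 * y + t" "s < t"
  shows "x + 2 * k + 1 \<le> y"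
proof -
  obtain d where "t = Suc s + d"
    using \<open>s < t\<close> less_imp_Suc_add by blast
  then show ?thesis
    using assms(1,2) by (simp add: power2_eq_square algebra_simps)
qed

lemma exponent_gap:
  assumes "pos_exponent k x \<or> neg_exponent k x" "pos_exponent k y \<or> neg_exponent k y" "x < y"
  shows "x + k \<le> y"
proof -
  obtain s where s: "2 * x + s = 3 * s\<^sup>2 + 6 * k * s \<or> 2 * x = 3 * s\<^sup>2 + 6 * k * s + s + 2 * k"
    using assms(1) unfolding pos_exponent_def neg_exponent_def by blast
  obtain t where t: "2 * y + t = 3 * t\<^sup>2 + 6 * k * t \<or> 2 * y = 3 * t\<^sup>2 + 6 * k * t + t + 2 * k"
    using assms(2) unfolding pos_exponent_def neg_exponent_def by blast
  consider "s < t" | "t < s" | "s = t"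
    by linarith
  then show ?thesis
  proof cases
    case 1
    have "x + 2 * k + 1 \<le> y"
      by (rule exponent_bound_mono[OF _ _ 1]) (use s t in linarith)+
    then show ?thesis by simp
  next
    case 2
    have "y + 2 * k + 1 \<le> x"
      by (rule exponent_bound_mono[OF _ _ 2]) (use s t in linarith)+
    then show ?thesis using \<open>x < y\<close> by simp
  next
    case 3
    then show ?thesis using s t \<open>x < y\<close> by auto
  qed
qed

lemma pos_exponent_not_neg_exponent:
  assumes "k \<ge> 1" "pos_exponent k x"
  shows "\<not> neg_exponent k x"
proof
  assume "neg_exponent k x"
  then obtain t where t: "2 * x = 3 * t\<^sup>2 + 6 * k * t + t + 2 * k"
    unfolding neg_exponent_def by blast
  obtain s where s: "2 * x + s = 3 * s\<^sup>2 + 6 * k * s"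
    using assms(2) unfolding pos_exponent_def by blast
  consider "s < t" | "t < s" | "s = t"
    by linarith
  then show False
  proof cases
    case 1
    have "x + 2 * k + 1 \<le> x"
      by (rule exponent_bound_mono[OF _ _ 1]) (use s t in linarith)+
    then show False by simp
  next
    case 2
    have "x + 2 * k + 1 \<le> x"
      by (rule exponent_bound_mono[OF _ _ 2]) (use s t in linarith)+
    then show False by simp
  next
    case 3
    then show False using s t assms(1) by simp
  qed
qed

section \<open>Butterfly partitions\<close>

lemma sorted_wrt_greater_last_le:
  fixes xs :: "'a::linorder list"
  shows "sorted_wrt (>) xs \<Longrightarrow> y \<in> set xs \<Longrightarrow> last xs \<le> y"
  by (induction xs) (auto intro: less_imp_le dest: bspec[OF _ last_in_set])

definition butterfly_tails :: "nat \<Rightarrow> nat \<Rightarrow> nat set set" where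
  "butterfly_tails a n = {S. S \<subseteq> {2..a - 2} \<and> 3 * a + \<Sum>S = n}"

definition butterfly_of :: "nat \<Rightarrow> nat set \<Rightarrow> nat list" where
  "butterfly_of a S = [a + 1, a, a - 1] @ rev (sorted_list_of_set S)"

lemma butterfly_of_nth_1: "butterfly_of a S ! 1 = a"
  by (simp add: butterfly_of_def)

lemma set_drop_butterfly_of: "finite S \<Longrightarrow> set (drop 3 (butterfly_of a S)) = S"
  by (simp add: butterfly_of_def)

lemma finite_butterfly_tails: "finite (butterfly_tails a n)"
  unfolding butterfly_tails_def by (rule finite_subset[of _ "Pow {2..a - 2}"]) auto

lemma butterfly_tails_empty: "n < 3 * a \<Longrightarrow> butterfly_tails a n = {}"
  by (auto simp: butterfly_tails_def)

lemma butterfly_of_partition: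
  assumes "a \<ge> 3" "S \<in> butterfly_tails a n"
  shows "butterfly_partition n (butterfly_of a S)"
proof -
  have S: "S \<subseteq> {2..a - 2}" "3 * a + \<Sum>S = n"
    using assms(2) unfolding butterfly_tails_def by auto
  then have "finite S"
    using finite_subset by blast
  let ?L = "rev (sorted_list_of_set S)"
  have L: "sorted_wrt (>) ?L" "set ?L = S" "sum_list ?L = \<Sum>S"
    using \<open>finite S\<close> by (simp_all add: sorted_wrt_rev distinct_sum_list_conv_Sum)
  have parts: "\<forall>p\<in>set (butterfly_of a S). 2 \<le> p"
    using S(1) assms(1) L(2) unfolding butterfly_of_def by auto
  have "\<forall>p\<in>S. p \<le> a - 2"
    using S(1) by auto
  then have "sorted_wrt (>) (butterfly_of a S)"
    using L(1,2) assms(1) unfolding butterfly_of_def by (auto simp: sorted_wrt_append)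
  moreover have "last (butterfly_of a S) \<in> set (butterfly_of a S)"
    by (rule last_in_set) (simp add: butterfly_of_def)
  moreover have "sum_list (butterfly_of a S) = n" "length (butterfly_of a S) \<ge> 3"
    "butterfly_of a S ! 0 = butterfly_of a S ! 1 + 1" "butterfly_of a S ! 1 = butterfly_of a S ! 2 + 1"
    using assms(1) L(3) S(2) by (simp_all add: butterfly_of_def)
  ultimately show ?thesis
    using parts unfolding butterfly_partition_def by fastforce
qed

lemma butterfly_partition_decomp:
  assumes "butterfly_partition n ps"
  shows "3 \<le> ps ! 1" "set (drop 3 ps) \<in> butterfly_tails (ps ! 1) n"
    "ps = butterfly_of (ps ! 1) (set (drop 3 ps))"
proof -
  have bp: "sorted_wrt (>) ps" "sum_list ps = n" "length ps \<ge> 3"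
    "ps ! 0 = ps ! 1 + 1" "ps ! 1 = ps ! 2 + 1" "last ps \<ge> 2"
    using assms unfolding butterfly_partition_def by auto
  obtain x0 x1 x2 rest where ps: "ps = x0 # x1 # x2 # rest"
    using bp(3) by (metis Suc_le_length_iff numeral_3_eq_3)
  have parts: "\<forall>p\<in>set ps. 2 \<le> p"
    using sorted_wrt_greater_last_le[OF bp(1)] bp(6) order_trans by blast
  have x: "x0 = x1 + 1" "x1 = x2 + 1" "x2 \<ge> 2"
    using bp(4,5) parts unfolding ps by auto
  have rest: "sorted_wrt (>) rest" "\<forall>y\<in>set rest. 2 \<le> y \<and> y < x2"
    using bp(1) parts unfolding ps by auto
  have "sorted_wrt (<) (rev rest)"
    using rest(1) by (simp add: sorted_wrt_rev)
  then have "sorted_list_of_set (set rest) = rev rest" "distinct rest"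
    by (auto intro: strict_sorted_equal simp: strict_sorted_iff)
  then have "3 * x1 + \<Sum>(set rest) = n"
    using bp(2) x unfolding ps by (simp add: distinct_sum_list_conv_Sum)
  moreover have "set rest \<subseteq> {2..x1 - 2}"
    using rest(2) x by force
  moreover have "ps ! 1 = x1" "drop 3 ps = rest"
    unfolding ps by (simp_all add: numeral_3_eq_3)
  ultimately show "3 \<le> ps ! 1" "set (drop 3 ps) \<in> butterfly_tails (ps ! 1) n"
    "ps = butterfly_of (ps ! 1) (set (drop 3 ps))"
    using x \<open>sorted_list_of_set (set rest) = rev rest\<close>
    unfolding butterfly_tails_def butterfly_of_def ps by simp_all
qed

lemma card_butterfly_partitions:
  "card {ps. butterfly_partition n ps \<and> P (ps ! 1)} =
    (\<Sum>a = 3..n. if P a then card (butterfly_tails a n) else 0)"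
proof -
  let ?A = "{a \<in> {3..n}. P a}"
  have "{ps. butterfly_partition n ps \<and> P (ps ! 1)} =
      (\<lambda>(a, S). butterfly_of a S) ` (SIGMA a:?A. butterfly_tails a n)"
  proof (intro equalityI subsetI)
    fix ps
    assume "ps \<in> {ps. butterfly_partition n ps \<and> P (ps ! 1)}"
    then have bp: "butterfly_partition n ps" "P (ps ! 1)"
      by auto
    have "ps ! 1 \<le> n"
      using butterfly_partition_decomp(2)[OF bp(1)] by (auto simp: butterfly_tails_def)
    then show "ps \<in> (\<lambda>(a, S). butterfly_of a S) ` (SIGMA a:?A. butterfly_tails a n)"
      using butterfly_partition_decomp[OF bp(1)] bp(2)
      by (intro image_eqI[of _ _ "(ps ! 1, set (drop 3 ps))"]) auto
  next
    fix ps
    assume "ps \<in> (\<lambda>(a, S). butterfly_of a S) ` (SIGMA a:?A. butterfly_tails a n)"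
    then obtain a S where "a \<in> ?A" "S \<in> butterfly_tails a n" "ps = butterfly_of a S"
      by auto
    then show "ps \<in> {ps. butterfly_partition n ps \<and> P (ps ! 1)}"
      using butterfly_of_partition butterfly_of_nth_1 by auto
  qed
  moreover have "inj_on (\<lambda>(a, S). butterfly_of a S) (SIGMA a:?A. butterfly_tails a n)"
  proof (rule inj_onI, clarify)
    fix a S a' S'
    assume "S \<in> butterfly_tails a n" "S' \<in> butterfly_tails a' n" and eq: "butterfly_of a S = butterfly_of a' S'"
    then have "finite S" "finite S'"
      unfolding butterfly_tails_def using finite_subset by auto
    then show "a = a' \<and> S = S'"
      using arg_cong[OF eq, of "\<lambda>ps. ps ! 1"] arg_cong[OF eq, of "\<lambda>ps. set (drop 3 ps)"]
      by (simp only: butterfly_of_nth_1 set_drop_butterfly_of)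
  qed
  ultimately have "card {ps. butterfly_partition n ps \<and> P (ps ! 1)} =
      card (SIGMA a:?A. butterfly_tails a n)"
    by (simp only: card_image)
  also have "\<dots> = (\<Sum>a\<in>?A. card (butterfly_tails a n))"
    by (rule card_SigmaI) (simp_all add: finite_butterfly_tails)
  also have "\<dots> = (\<Sum>a = 3..n. if P a then card (butterfly_tails a n) else 0)"
    by (rule sum.inter_filter) simp
  finally show ?thesis .
qed

lemma s_e_minus_s_o_sum:
  "int (s_e n) - int (s_o n) = (\<Sum>a = 3..n. (-1) ^ a * int (card (butterfly_tails a n)))"
  unfolding s_e_def s_o_def card_butterfly_partitions[of n even] card_butterfly_partitions[of n odd]
    of_nat_sum sum_subtractf[symmetric]
  by (rule sum.cong) auto

lemma card_butterfly_tails: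
  "int (card (butterfly_tails (b + 3) n)) = (fps_X ^ (3 * b + 9) * distinct_parts_fps 2 b) $ n"
proof (cases "n < 3 * b + 9")
  case True
  then show ?thesis
    by (simp add: butterfly_tails_empty fps_X_power_mult_nth)
next
  case False
  then have "butterfly_tails (b + 3) n = {S. S \<subseteq> {2..<2 + b} \<and> \<Sum>S = n - (3 * b + 9)}"
    unfolding butterfly_tails_def by (auto simp: atLeastLessThanSuc_atLeastAtMost[symmetric])
  then show ?thesis
    using False by (simp add: fps_X_power_mult_nth distinct_parts_fps_nth)
qed

lemma s_e_minus_s_o_fps: "int (s_e n) - int (s_o n) = - ((fps_X ^ 9 * alt_series 3 2) $ n)"
proof -
  let ?c = "\<lambda>a. (-1) ^ a * int (card (butterfly_tails a n))"
  have "int (s_e n) - int (s_o n) = (\<Sum>a = 0 + 3..n + 3. ?c a)"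
    unfolding s_e_minus_s_o_sum
    by (rule sum.mono_neutral_left) (auto simp: butterfly_tails_empty)
  also have "\<dots> = - (\<Sum>b\<le>n. (-1) ^ b * (fps_X ^ (3 * b + 9) * distinct_parts_fps 2 b) $ n)"
    unfolding sum.shift_bounds_cl_nat_ivl atLeast0AtMost card_butterfly_tails
    by (simp add: power_add sum_negf)
  also have "(\<Sum>b\<le>n. (-1) ^ b * (fps_X ^ (3 * b + 9) * distinct_parts_fps 2 b) $ n) =
      (\<Sum>b\<le>n. (fps_X ^ 9 * alt_term 3 2 b) $ n)"
    unfolding alt_term_nth fps_X_power_mult_nth by (rule sum.cong) (auto simp: add.commute)
  also have "\<dots> = fps_lfsum (\<lambda>b. fps_X ^ 9 * alt_term 3 2 b) $ n"
    by (simp add: fps_lfsum_def)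
  also have "fps_lfsum (\<lambda>b. fps_X ^ 9 * alt_term 3 2 b) = fps_X ^ 9 * alt_series 3 2"
    unfolding alt_series_def by (rule fps_lfsum_mult_left) (simp add: alt_term_order_ge_index)
  finally show ?thesis .
qed

lemma s_e_minus_s_o_exponents:
  "int (s_e n) - int (s_o n) = - of_bool (n = 9)
    + (if 12 \<le> n then of_bool (pos_exponent 3 (n - 12)) - of_bool (neg_exponent 3 (n - 12)) else 0)
    + (if 14 \<le> n then of_bool (pos_exponent 3 (n - 14)) - of_bool (neg_exponent 3 (n - 14)) else 0)"
proof -
  have "alt_series 3 2 = 1 - fps_X ^ 3 * (1 + fps_X ^ 2) * alt_series 3 3"
    using alt_series_shift_k[of 3 2] by simp
  then have "fps_X ^ 9 * alt_series 3 2 =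
      fps_X ^ 9 - fps_X ^ 12 * alt_series 3 3 - fps_X ^ 14 * alt_series 3 3"
    by (simp add: ring_distribs flip: power_add mult.assoc)
  then show ?thesis
    unfolding s_e_minus_s_o_fps
    by (simp add: fps_X_power_mult_nth alt_series_diagonal_nth)
qed

section \<open>The values P_i(t)\<close>

lemma two_times_P_of_nat:
  "2 * P1 (int s + 2) = int (3 * s\<^sup>2 + 13 * s + 18)"
  "2 * P2 (int s + 2) = int (3 * s\<^sup>2 + 17 * s + 24)"
  "2 * P3 (int s + 2) = int (3 * s\<^sup>2 + 17 * s + 28)"
  "2 * P4 (int s + 2) = int (3 * s\<^sup>2 + 19 * s + 30)"
  unfolding P1_def P2_def P3_def P4_def
  by (simp_all add: even_add even_mult_iff power2_eq_square) (simp_all add: algebra_simps)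

lemma ex_P_iff:
  assumes "\<And>s. 2 * P (int s + 2) = int (f s)"
  shows "(\<exists>t\<ge>2. int n = P t) \<longleftrightarrow> (\<exists>s. 2 * n = f s)"
proof -
  have "(\<exists>t\<ge>2. int n = P t) \<longleftrightarrow> (\<exists>s. int n = P (int s + 2))"
    by (metis add.commute of_nat_0_le_iff zle_iff_zadd)
  moreover have "int n = P (int s + 2) \<longleftrightarrow> 2 * n = f s" for s
    using assms[of s] by linarith
  ultimately show ?thesis
    by simp
qed

lemma P2_iff: "(\<exists>t\<ge>2. int n = P2 t) \<longleftrightarrow> 12 \<le> n \<and> pos_exponent 3 (n - 12)"
proof -
  have "2 * n = 3 * s\<^sup>2 + 17 * s + 24 \<longleftrightarrow> 12 \<le> n \<and> 2 * (n - 12) + s = 3 * s\<^sup>2 + 6 * 3 * s" for s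
    by auto
  moreover have "(\<exists>t\<ge>2. int n = P2 t) \<longleftrightarrow> (\<exists>s. 2 * n = 3 * s\<^sup>2 + 17 * s + 24)"
    by (rule ex_P_iff) (rule two_times_P_of_nat)
  ultimately show ?thesis
    unfolding pos_exponent_def by blast
qed

lemma P3_iff: "(\<exists>t\<ge>2. int n = P3 t) \<longleftrightarrow> 14 \<le> n \<and> pos_exponent 3 (n - 14)"
proof -
  have "2 * n = 3 * s\<^sup>2 + 17 * s + 28 \<longleftrightarrow> 14 \<le> n \<and> 2 * (n - 14) + s = 3 * s\<^sup>2 + 6 * 3 * s" for s
    by auto
  moreover have "(\<exists>t\<ge>2. int n = P3 t) \<longleftrightarrow> (\<exists>s. 2 * n = 3 * s\<^sup>2 + 17 * s + 28)"
    by (rule ex_P_iff) (rule two_times_P_of_nat)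
  ultimately show ?thesis
    unfolding pos_exponent_def by blast
qed

lemma P4_iff: "(\<exists>t\<ge>2. int n = P4 t) \<longleftrightarrow> 12 \<le> n \<and> neg_exponent 3 (n - 12)"
proof -
  have "2 * n = 3 * s\<^sup>2 + 19 * s + 30 \<longleftrightarrow> 12 \<le> n \<and> 2 * (n - 12) = 3 * s\<^sup>2 + 6 * 3 * s + s + 2 * 3" for s
    by auto
  moreover have "(\<exists>t\<ge>2. int n = P4 t) \<longleftrightarrow> (\<exists>s. 2 * n = 3 * s\<^sup>2 + 19 * s + 30)"
    by (rule ex_P_iff) (rule two_times_P_of_nat)
  ultimately show ?thesis
    unfolding neg_exponent_def by blast
qed

lemma P1_iff: "(\<exists>t\<ge>2. int n = P1 t) \<longleftrightarrow> n = 9 \<or> 14 \<le> n \<and> neg_exponent 3 (n - 14)"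
proof -
  have ex_Suc: "(\<exists>s. Q s) \<longleftrightarrow> Q 0 \<or> (\<exists>r. Q (Suc r))" for Q :: "nat \<Rightarrow> bool"
    by (metis not0_implies_Suc)
  have step: "2 * n = 3 * (Suc r)\<^sup>2 + 13 * Suc r + 18 \<longleftrightarrow>
      14 \<le> n \<and> 2 * (n - 14) = 3 * r\<^sup>2 + 6 * 3 * r + r + 2 * 3" for r
    by (auto simp: power2_eq_square)
  have "(\<exists>t\<ge>2. int n = P1 t) \<longleftrightarrow> (\<exists>s. 2 * n = 3 * s\<^sup>2 + 13 * s + 18)"
    by (rule ex_P_iff) (rule two_times_P_of_nat)
  also have "\<dots> \<longleftrightarrow> n = 9 \<or> (\<exists>r. 2 * n = 3 * (Suc r)\<^sup>2 + 13 * Suc r + 18)"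
    by (subst ex_Suc) simp
  finally show ?thesis
    unfolding neg_exponent_def using step by blast
qed

lemma s_e_minus_s_o_P:
  "int (s_e n) - int (s_o n) =
    of_bool (\<exists>t\<ge>2. int n = P2 t) + of_bool (\<exists>t\<ge>2. int n = P3 t)
    - of_bool (\<exists>t\<ge>2. int n = P1 t) - of_bool (\<exists>t\<ge>2. int n = P4 t)"
  unfolding s_e_minus_s_o_exponents P1_iff P2_iff P3_iff P4_iff
  by (cases "n = 9") auto

lemma P_values_exclusive:
  "of_bool (\<exists>t\<ge>2. int n = P1 t) + of_bool (\<exists>t\<ge>2. int n = P2 t)
    + of_bool (\<exists>t\<ge>2. int n = P3 t) + of_bool (\<exists>t\<ge>2. int n = P4 t) \<le> (1 :: nat)"
proof -
  have no_gap: "\<not> ((pos_exponent 3 (n - 14) \<or> neg_exponent 3 (n - 14)) \<and>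
      (pos_exponent 3 (n - 12) \<or> neg_exponent 3 (n - 12)))" if "14 \<le> n"
  proof
    assume "(pos_exponent 3 (n - 14) \<or> neg_exponent 3 (n - 14)) \<and>
      (pos_exponent 3 (n - 12) \<or> neg_exponent 3 (n - 12))"
    then have "n - 14 + 3 \<le> n - 12"
      using that by (intro exponent_gap) auto
    then show False
      using that by linarith
  qed
  have "\<not> (pos_exponent 3 m \<and> neg_exponent 3 m)" for m
    using pos_exponent_not_neg_exponent[of 3 m] by auto
  then show ?thesis
    unfolding P1_iff P2_iff P3_iff P4_iff using no_gap by auto
qed

theorem theorem4p6:
  fixes n :: nat
  assumes "n \<ge> 6"
  shows "((\<forall>t::int. t \<ge> 2 \<longrightarrow> int n \<notin> {P1 t, P2 t, P3 t, P4 t}) \<longrightarrow> s_e n = s_o n)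
       \<and> ((\<exists>t::int. t \<ge> 2 \<and> (int n = P1 t \<or> int n = P4 t)) \<longrightarrow> int (s_e n) = int (s_o n) - 1)
       \<and> ((\<exists>t::int. t \<ge> 2 \<and> (int n = P2 t \<or> int n = P3 t)) \<longrightarrow> int (s_e n) = int (s_o n) + 1)"
proof -
  define A1 A2 A3 A4 where "A1 = (\<exists>t\<ge>2. int n = P1 t)" and "A2 = (\<exists>t\<ge>2. int n = P2 t)"
    and "A3 = (\<exists>t\<ge>2. int n = P3 t)" and "A4 = (\<exists>t\<ge>2. int n = P4 t)"
  have "(\<forall>t::int. t \<ge> 2 \<longrightarrow> int n \<notin> {P1 t, P2 t, P3 t, P4 t}) \<longleftrightarrow> \<not> A1 \<and> \<not> A2 \<and> \<not> A3 \<and> \<not> A4"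
    "(\<exists>t::int. t \<ge> 2 \<and> (int n = P1 t \<or> int n = P4 t)) \<longleftrightarrow> A1 \<or> A4"
    "(\<exists>t::int. t \<ge> 2 \<and> (int n = P2 t \<or> int n = P3 t)) \<longleftrightarrow> A2 \<or> A3"
    unfolding A1_def A2_def A3_def A4_def by auto
  moreover have "int (s_e n) - int (s_o n) = of_bool A2 + of_bool A3 - of_bool A1 - of_bool A4"
    unfolding A1_def A2_def A3_def A4_def by (rule s_e_minus_s_o_P)
  moreover have "of_bool A1 + of_bool A2 + of_bool A3 + of_bool A4 \<le> (1 :: nat)"
    unfolding A1_def A2_def A3_def A4_def by (rule P_values_exclusive)
  ultimately show ?thesis
    by (cases A1; cases A2; cases A3; cases A4) simp_all
qed

end
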